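(* Let $N\ge 1$ and let $\mathbf X=(X_t)_{t\in I}$ be an $N$-MPR process. Then for all $s\le t\le u$ in $I$: (i) the matrix $\mathcal A_N(s,t)$ is non-singular; (ii) $\mathcal A_N(s,u)=\mathcal A_N(t,u)\mathcal A_N(s,t)$ and $\mathcal A_N(s,s)=I$ (the identity matrix); (iii) there exists a family $\{V_N(t)\}_{t\in I}$ of non-singular, lower triangular $(N+1)\times(N+1)$ matrices such that $\mathcal A_N(s,u)=V_N(u)V_N^{-1}(s)$ for all $s\le u$ in $I$; (iv) the family in (iii) can be chosen so that all diagonal entries of every $V_N(s)$ are positive.
   Context: $I=[l,r]$ is a finite or infinite segment of the real line. $\mathbf X=(X_t)_{t\in I}$ is a real Markov process with $E|X_t|^n<\infty$ for all $n\in\mathbb N$, $t\in I$, and such that the support of the law of each $X_t$ contains infinitely many points. Let $\mathcal F_{\le s}=\sigma(X_v: v\in[l,s])$. The process is $N$-TLI if for every $0<n\le N$ and $s\neq t$ in $I$ the matrix $[\operatorname{cov}(X_t^i,X_s^j)]_{i,j=1,\dots,n}$ is non-singular; it is $N$-MSC if for all $m,j\le N$ the function $(t,s)\mapsto EX_t^mX_s^j$ is continuous at least on the diagonal $s=t$. It is $N$-MPR if it is Markov, $N$-TLI, $N$-MSC and for every $1\le n\le N$ and $s\le t$ in $I$, $E(X_t^n\mid\mathcal F_{\le s})=\sum_{k=0}^n\gamma_{n,k}(s,t)X_s^k$ a.s. for some real coefficients $\gamma_{n,k}(s,t)$ (so it is a polynomial in $X_s$ of degree at most $n$); set $\gamma_{0,0}=1$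 and $\gamma_{i,j}=0$ for $j>i$. Define the lower triangular matrix $\mathcal A_n(s,t)=[\gamma_{i,j}(s,t)]_{i,j=0,\dots,n}$, so that $E(X_t^{(n)}\mid\mathcal F_{\le s})=\mathcal A_n(s,t)X_s^{(n)}$ where $X_t^{(n)}=(1,X_t,\dots,X_t^n)^T$. *)

theory Defs
  imports "HOL-Probability.Probability" "Jordan_Normal_Form.Matrix"
begin

definition segment :: "ereal \<Rightarrow> ereal \<Rightarrow> real set" where
  "segment l r = {t. l \<le> ereal t \<and> ereal t \<le> r}"

definition past_sigma :: "'a measure \<Rightarrow> real set \<Rightarrow> (real \<Rightarrow> 'a \<Rightarrow> real) \<Rightarrow> real \<Rightarrow> 'a measure" where
  "past_sigma M I X s = sigma (space M)
     (\<Union>v\<in>{v\<in>I. v \<le> s}. {X v -` B \<inter> space M | B. B \<in> sets borel})"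

definition rv_sigma :: "'a measure \<Rightarrow> ('a \<Rightarrow> real) \<Rightarrow> 'a measure" where
  "rv_sigma M Y = vimage_algebra (space M) Y borel"

definition markov_process :: "'a measure \<Rightarrow> real set \<Rightarrow> (real \<Rightarrow> 'a \<Rightarrow> real) \<Rightarrow> bool" where
  "markov_process M I X \<longleftrightarrow>
     (\<forall>s\<in>I. \<forall>t\<in>I. s \<le> t \<longrightarrow> (\<forall>B\<in>sets borel.
        AE x in M. real_cond_exp M (past_sigma M I X s) (indicator (X t -` B \<inter> space M)) x
                 = real_cond_exp M (rv_sigma M (X s)) (indicator (X t -` B \<inter> space M)) x))"

definition law_support :: "'a measure \<Rightarrow> ('a \<Rightarrow> real) \<Rightarrow> real set" where
  "law_support M Y = {y. \<forall>e>0. emeasure (distr M borel Y) (ball y e) > 0}"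

definition covariance :: "'a measure \<Rightarrow> ('a \<Rightarrow> real) \<Rightarrow> ('a \<Rightarrow> real) \<Rightarrow> real" where
  "covariance M Y Z = (\<integral>x. Y x * Z x \<partial>M) - (\<integral>x. Y x \<partial>M) * (\<integral>x. Z x \<partial>M)"

definition TLI :: "nat \<Rightarrow> 'a measure \<Rightarrow> real set \<Rightarrow> (real \<Rightarrow> 'a \<Rightarrow> real) \<Rightarrow> bool" where
  "TLI N M I X \<longleftrightarrow> (\<forall>n. 0 < n \<and> n \<le> N \<longrightarrow> (\<forall>s\<in>I. \<forall>t\<in>I. s \<noteq> t \<longrightarrow>
     invertible_mat (mat n n (\<lambda>(i,j). covariance M (\<lambda>x. X t x ^ (i+1)) (\<lambda>x. X s x ^ (j+1))))))"

definition MSC :: "nat \<Rightarrow> 'a measure \<Rightarrow> real set \<Rightarrow> (real \<Rightarrow> 'a \<Rightarrow> real) \<Rightarrow> bool" where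
  "MSC N M I X \<longleftrightarrow> (\<forall>m\<le>N. \<forall>j\<le>N. \<forall>t\<in>I.
     continuous (at (t,t) within I \<times> I) (\<lambda>(a,b). \<integral>x. X a x ^ m * X b x ^ j \<partial>M))"

definition poly_regression :: "nat \<Rightarrow> 'a measure \<Rightarrow> real set \<Rightarrow> (real \<Rightarrow> 'a \<Rightarrow> real)
    \<Rightarrow> (nat \<Rightarrow> nat \<Rightarrow> real \<Rightarrow> real \<Rightarrow> real) \<Rightarrow> bool" where
  "poly_regression N M I X \<gamma> \<longleftrightarrow> (\<forall>n. 1 \<le> n \<and> n \<le> N \<longrightarrow> (\<forall>s\<in>I. \<forall>t\<in>I. s \<le> t \<longrightarrow>
     (AE x in M. real_cond_exp M (past_sigma M I X s) (\<lambda>x. X t x ^ n) x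
               = (\<Sum>k\<le>n. \<gamma> n k s t * X s x ^ k))))"

definition A_mat :: "nat \<Rightarrow> (nat \<Rightarrow> nat \<Rightarrow> real \<Rightarrow> real \<Rightarrow> real) \<Rightarrow> real \<Rightarrow> real \<Rightarrow> real mat" where
  "A_mat N \<gamma> s t = mat (N+1) (N+1) (\<lambda>(i,j). \<gamma> i j s t)"

definition lower_triangular_mat :: "real mat \<Rightarrow> bool" where
  "lower_triangular_mat V \<longleftrightarrow> (\<forall>i<dim_row V. \<forall>j<dim_col V. i < j \<longrightarrow> V $$ (i,j) = 0)"

end

theory Submission
  imports Defs "Jordan_Normal_Form.VS_Connect" "HOL-Analysis.Poly_Roots"
begin

text \<open>
  Write \<open>M(b,v) = [E X\<^sub>b\<^sup>i X\<^sub>v\<^sup>j]\<close> (\<open>i, j \<le> n\<close>) for the mixed moment matrices. Multiplying the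
  regression identity \<open>E(X\<^sub>u\<^sup>i | F\<^sub>\<le>\<^sub>s) = \<Sum>\<^sub>k \<gamma>\<^sub>i\<^sub>k(s,u) X\<^sub>s\<^sup>k\<close> by the \<open>F\<^sub>\<le>\<^sub>s\<close>-measurable
  \<open>X\<^sub>v\<^sup>j\<close> (\<open>v \<le> s\<close>) and integrating gives \<open>M(u,v) = A(s,u) M(s,v)\<close>. The Hankel matrix
  \<open>M(s,s)\<close> is positive definite because the law of \<open>X\<^sub>s\<close> has infinite support, so cancelling it
  yields \<open>A(s,s) = I\<close> and \<open>A(s,u) = A(t,u) A(s,t)\<close>.

  Near the diagonal, \<open>det A(a,b) (det M(a,a))\<^sup>2 = det M(b,a) det M(a,a)\<close> is positive by the moment
  continuity, and the cocycle identity spreads positivity of \<open>det A\<close> over the whole interval.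
  Since \<open>det A\<^sub>n = \<Prod>\<^sub>k\<^sub>\<le>\<^sub>n \<gamma>\<^sub>k\<^sub>k\<close> for every \<open>n \<le> N\<close>, all \<open>\<gamma>\<^sub>k\<^sub>k\<close> are positive.
  Finally \<open>V(u) = A(s\<^sub>0,u)\<close> for \<open>u \<ge> s\<^sub>0\<close> and \<open>V(u) = A(u,s\<^sub>0)\<^sup>-\<^sup>1\<close> for \<open>u < s\<^sub>0\<close> factorises
  \<open>A\<close>, and inverses of lower triangular matrices with positive diagonal are of the same kind.
\<close>

unbundle no vec_syntax

section \<open>Triangular matrices\<close>

lemma lower_triangular_mult_entry:
  fixes L K :: "'a::comm_ring_1 mat"
  assumes L: "L \<in> carrier_mat n n" and K: "K \<in> carrier_mat n n"
    and lower: "\<And>p q. p < q \<Longrightarrow> q < n \<Longrightarrow> L $$ (p,q) = 0"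
    and i: "i < n" and j: "j < n"
  shows "(L * K) $$ (i,j) = L $$ (i,i) * K $$ (i,j) + (\<Sum>k<i. L $$ (i,k) * K $$ (k,j))"
proof -
  have "(L * K) $$ (i,j) = (\<Sum>k<n. L $$ (i,k) * K $$ (k,j))"
    using L K i j by (simp add: scalar_prod_def atLeast0LessThan)
  also have "\<dots> = (\<Sum>k<Suc i. L $$ (i,k) * K $$ (k,j))"
    by (rule sum.mono_neutral_right) (use i lower in auto)
  finally show ?thesis by (simp add: add.commute)
qed

lemma lower_triangular_right_inverse:
  fixes L K :: "'a::field mat"
  assumes L: "L \<in> carrier_mat n n" and K: "K \<in> carrier_mat n n"
    and lower: "\<And>i j. i < j \<Longrightarrow> j < n \<Longrightarrow> L $$ (i,j) = 0"
    and diag: "\<And>i. i < n \<Longrightarrow> L $$ (i,i) \<noteq> 0"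
    and inv: "L * K = 1\<^sub>m n"
  shows "\<And>i j. i < j \<Longrightarrow> j < n \<Longrightarrow> K $$ (i,j) = 0"
    and "\<And>i. i < n \<Longrightarrow> K $$ (i,i) = 1 / L $$ (i,i)"
proof -
  note entry = lower_triangular_mult_entry[OF L K lower]
  show upper: "K $$ (i,j) = 0" if "i < j" "j < n" for i j
    using that
  proof (induction i rule: less_induct)
    case (less i)
    have "(\<Sum>k<i. L $$ (i,k) * K $$ (k,j)) = 0"
      using less by (intro sum.neutral) auto
    moreover have "(L * K) $$ (i,j) = 0" using inv less.prems by simp
    ultimately show ?case using entry[of i j] diag[of i] less.prems by simp
  qed
  show "K $$ (i,i) = 1 / L $$ (i,i)" if i: "i < n" for i
  proof -
    have "(\<Sum>k<i. L $$ (i,k) * K $$ (k,i)) = 0"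
      using upper i by (intro sum.neutral) auto
    moreover have "(L * K) $$ (i,i) = 1" using inv i by simp
    ultimately show ?thesis using entry[of i i] diag[OF i] i by (simp add: field_simps)
  qed
qed

lemma lower_triangular_mat_right_inverse:
  fixes L K :: "real mat"
  assumes L: "L \<in> carrier_mat n n" and K: "K \<in> carrier_mat n n"
    and lower: "lower_triangular_mat L" and diag: "\<And>i. i < n \<Longrightarrow> 0 < L $$ (i,i)"
    and inv: "L * K = 1\<^sub>m n"
  shows "lower_triangular_mat K \<and> (\<forall>i<n. 0 < K $$ (i,i))"
proof -
  have "\<And>i j. i < j \<Longrightarrow> j < n \<Longrightarrow> L $$ (i,j) = 0"
    using lower L unfolding lower_triangular_mat_def by auto
  note K_entries = lower_triangular_right_inverse[OF L K this _ inv]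
  show ?thesis
    using K K_entries diag unfolding lower_triangular_mat_def
    by (auto simp: less_imp_neq[symmetric])
qed

lemma det_nonzero_imp_inverse:
  fixes A :: "'a::field mat"
  assumes "A \<in> carrier_mat n n" "det A \<noteq> 0"
  shows "\<exists>B\<in>carrier_mat n n. A * B = 1\<^sub>m n \<and> B * A = 1\<^sub>m n"
  using det_non_zero_imp_unit[OF assms, of "()"] by (auto simp: Units_def ring_mat_def)

lemma det_nonzero_imp_invertible_mat:
  fixes A :: "'a::field mat"
  assumes "A \<in> carrier_mat n n" "det A \<noteq> 0"
  shows "invertible_mat A"
  using det_nonzero_imp_inverse[OF assms] assms(1)
  unfolding invertible_mat_def inverts_mat_def by auto

lemma A_mat_carrier [simp]: "A_mat n \<gamma> s t \<in> carrier_mat (Suc n) (Suc n)"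
  by (simp add: A_mat_def)

lemma det_A_mat:
  assumes "\<And>i j. i < j \<Longrightarrow> \<gamma> i j s t = 0"
  shows "det (A_mat n \<gamma> s t) = (\<Prod>k<Suc n. \<gamma> k k s t)"
proof -
  have "det (A_mat n \<gamma> s t) = prod_list (diag_mat (A_mat n \<gamma> s t))"
    by (rule det_lower_triangular[OF _ A_mat_carrier]) (use assms in \<open>auto simp: A_mat_def\<close>)
  also have "\<dots> = prod_list (map (\<lambda>k. \<gamma> k k s t) [0..<Suc n])"
    unfolding diag_mat_def by (intro arg_cong[where f = prod_list] map_cong) (auto simp: A_mat_def)
  also have "\<dots> = (\<Prod>k\<in>{0..<Suc n}. \<gamma> k k s t)"
    by (simp add: prod.atLeastLessThan_conv_list)
  finally show ?thesis by (simp add: atLeast0LessThan)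
qed

lemma continuous_det_mat:
  fixes F :: "nat \<Rightarrow> nat \<Rightarrow> 'b::t2_space \<Rightarrow> real"
  assumes "\<And>i j. i < n \<Longrightarrow> j < n \<Longrightarrow> continuous (at x within S) (F i j)"
  shows "continuous (at x within S) (\<lambda>y. det (mat n n (\<lambda>(i,j). F i j y)))"
proof -
  have leibniz: "det (mat n n (\<lambda>(i,j). F i j y)) =
     (\<Sum>p\<in>{p. p permutes {0..<n}}. signof p * (\<Prod>i = 0..<n. F i (p i) y))" for y
    unfolding det_def'[OF mat_carrier]
    by (intro sum.cong refl arg_cong2[where f = "(*)"] prod.cong)
       (auto dest: permutes_in_image)
  show ?thesis
    unfolding leibniz using assms
    by (intro continuous_sum continuous_mult continuous_const continuous_prod)
       (auto dest: permutes_in_image)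
qed

section \<open>Cocycles over an interval\<close>

lemma cocycle_factorization:
  fixes A :: "real \<Rightarrow> real \<Rightarrow> 'a::semiring_1 mat" and I :: "real set"
  assumes carrier: "\<And>s t. s \<in> I \<Longrightarrow> t \<in> I \<Longrightarrow> s \<le> t \<Longrightarrow> A s t \<in> carrier_mat n n"
    and invertible: "\<And>s t. s \<in> I \<Longrightarrow> t \<in> I \<Longrightarrow> s \<le> t \<Longrightarrow>
      \<exists>B \<in> carrier_mat n n. A s t * B = 1\<^sub>m n \<and> B * A s t = 1\<^sub>m n"
    and cocycle: "\<And>s t u. s \<in> I \<Longrightarrow> t \<in> I \<Longrightarrow> u \<in> I \<Longrightarrow> s \<le> t \<Longrightarrow> t \<le> u \<Longrightarrow>
      A s u = A t u * A s t"
    and P: "\<And>s t. s \<in> I \<Longrightarrow> t \<in> I \<Longrightarrow> s \<le> t \<Longrightarrow> P (A s t)"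
    and P_inverse: "\<And>s t B. s \<in> I \<Longrightarrow> t \<in> I \<Longrightarrow> s \<le> t \<Longrightarrow> B \<in> carrier_mat n n \<Longrightarrow>
      A s t * B = 1\<^sub>m n \<Longrightarrow> P B"
  shows "\<exists>V Vinv. (\<forall>t\<in>I. V t \<in> carrier_mat n n \<and> Vinv t \<in> carrier_mat n n
            \<and> V t * Vinv t = 1\<^sub>m n \<and> Vinv t * V t = 1\<^sub>m n \<and> P (V t))
          \<and> (\<forall>s\<in>I. \<forall>u\<in>I. s \<le> u \<longrightarrow> A s u = V u * Vinv s)"
proof (cases "I = {}")
  case False
  then obtain s0 where s0: "s0 \<in> I" by blast
  define Ainv where "Ainv s t = (SOME B. B \<in> carrier_mat n n \<and> A s t * B = 1\<^sub>m n \<and> B * A s t = 1\<^sub>m n)"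
    for s t
  have Ainv: "Ainv s t \<in> carrier_mat n n" "A s t * Ainv s t = 1\<^sub>m n" "Ainv s t * A s t = 1\<^sub>m n"
    if "s \<in> I" "t \<in> I" "s \<le> t" for s t
    using someI_ex[OF invertible[OF that, unfolded Bex_def]] unfolding Ainv_def by auto
  define V where "V u = (if s0 \<le> u then A s0 u else Ainv u s0)" for u
  define Vinv where "Vinv u = (if s0 \<le> u then Ainv s0 u else A u s0)" for u
  have "A s u = V u * Vinv s" if s: "s \<in> I" and u: "u \<in> I" and su: "s \<le> u" for s u
  proof (cases "s0 \<le> s"; cases "s0 \<le> u")
    assume "s0 \<le> s" "s0 \<le> u"
    have "V u * Vinv s = (A s u * A s0 s) * Ainv s0 s"
      using cocycle[OF s0 s u] \<open>s0 \<le> s\<close> su by (simp add: V_def Vinv_def)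
    also have "\<dots> = A s u * (A s0 s * Ainv s0 s)"
      using carrier Ainv \<open>s0 \<le> s\<close> s0 s u su by (metis assoc_mult_mat)
    finally show ?thesis using carrier[OF s u su] Ainv[OF s0 s \<open>s0 \<le> s\<close>] by simp
  next
    assume "\<not> s0 \<le> s" "s0 \<le> u"
    then show ?thesis using cocycle[OF s s0 u] by (simp add: V_def Vinv_def)
  next
    assume "\<not> s0 \<le> s" "\<not> s0 \<le> u"
    have "V u * Vinv s = Ainv u s0 * (A u s0 * A s u)"
      using cocycle[OF s u s0] \<open>\<not> s0 \<le> s\<close> \<open>\<not> s0 \<le> u\<close> su by (simp add: V_def Vinv_def)
    also have "\<dots> = (Ainv u s0 * A u s0) * A s u"
      using carrier Ainv \<open>\<not> s0 \<le> u\<close> s0 s u su by (metis assoc_mult_mat nle_le)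
    finally show ?thesis using carrier[OF s u su] Ainv[OF u s0] \<open>\<not> s0 \<le> u\<close> by simp
  qed (use su in simp)
  moreover have "V t \<in> carrier_mat n n \<and> Vinv t \<in> carrier_mat n n \<and> V t * Vinv t = 1\<^sub>m n
      \<and> Vinv t * V t = 1\<^sub>m n \<and> P (V t)" if t: "t \<in> I" for t
    using Ainv[OF s0 t] Ainv[OF t s0] carrier[OF s0 t] carrier[OF t s0] P[OF s0 t] P_inverse[OF t s0]
    by (cases "s0 \<le> t") (auto simp: V_def Vinv_def)
  ultimately show ?thesis by blast
qed simp

lemma locally_positive_cocycle_positive:
  fixes D :: "real \<Rightarrow> real \<Rightarrow> real" and I :: "real set"
  assumes I: "is_interval I"
    and cocycle: "\<And>s t u. s \<in> I \<Longrightarrow> t \<in> I \<Longrightarrow> u \<in> I \<Longrightarrow> s \<le> t \<Longrightarrow> t \<le> u \<Longrightarrow>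
      D s u = D t u * D s t"
    and local: "\<And>c. c \<in> I \<Longrightarrow>
      \<exists>\<delta>>0. \<forall>a\<in>I. \<forall>b\<in>I. a \<le> b \<longrightarrow> dist a c < \<delta> \<longrightarrow> dist b c < \<delta> \<longrightarrow> 0 < D a b"
    and a: "a \<in> I" and b: "b \<in> I" and ab: "a \<le> b"
  shows "0 < D a b"
proof (rule ccontr)
  \<comment> \<open>with \<open>c\<close> the infimum of the failure points, a point \<open>s\<close> just left of \<open>c\<close> and a failure
     point \<open>t\<close> just right of it give \<open>0 < D(a,s) D(s,t) = D(a,t) \<le> 0\<close>\<close>
  define T where "T = {t \<in> I. a \<le> t \<and> D a t \<le> 0}"
  assume "\<not> 0 < D a b"
  then have bT: "b \<in> T" using b ab by (simp add: T_def)
  have bdd: "bdd_below T" unfolding T_def by (rule bdd_belowI[of _ a]) auto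
  define c where "c = Inf T"
  have ac: "a \<le> c" unfolding c_def using bT by (intro cInf_greatest) (auto simp: T_def)
  have cb: "c \<le> b" unfolding c_def by (rule cInf_lower[OF bT bdd])
  have cI: "c \<in> I" using mem_is_interval_1_I[OF I a b ac cb] .
  obtain \<delta> where \<delta>: "\<delta> > 0"
    and pos: "\<And>s t. s \<in> I \<Longrightarrow> t \<in> I \<Longrightarrow> s \<le> t \<Longrightarrow> dist s c < \<delta> \<Longrightarrow> dist t c < \<delta> \<Longrightarrow> 0 < D s t"
    using local[OF cI] by blast
  obtain t where tT: "t \<in> T" and t_lt: "t < c + \<delta>"
    using cInf_less_iff[of T "c + \<delta>"] bT bdd \<delta> unfolding c_def by fastforce
  have tI: "t \<in> I" and at: "a \<le> t" and Dt: "D a t \<le> 0" using tT unfolding T_def by auto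
  have ct: "c \<le> t" unfolding c_def by (rule cInf_lower[OF tT bdd])
  define s where "s = max a (c - \<delta>/2)"
  have as: "a \<le> s" and sc: "s \<le> c" and sc_dist: "dist s c < \<delta>"
    using ac \<delta> by (auto simp: s_def dist_real_def)
  have sI: "s \<in> I" using mem_is_interval_1_I[OF I a cI as sc] .
  have "0 < D a s"
  proof (cases "s = a")
    case True
    then show ?thesis using pos[OF a a] sc_dist by simp
  next
    case False
    then have "s < c" using \<delta> by (simp add: s_def)
    then have "s \<notin> T" using cInf_lower[OF _ bdd] unfolding c_def by force
    then show ?thesis using sI as by (simp add: T_def)
  qed
  moreover have "0 < D s t"
    using pos[OF sI tI] sc ct sc_dist t_lt by (simp add: dist_real_def)
  ultimately have "0 < D a t" using cocycle[OF a sI tI as] sc ct by simp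
  with Dt show False by simp
qed

lemma eventually_at_pair_within_imp_dist:
  fixes c :: "'b::metric_space"
  assumes "eventually P (at (c,c) within S \<times> S)" "P (c,c)"
  shows "\<exists>\<delta>>0. \<forall>a\<in>S. \<forall>b\<in>S. dist a c < \<delta> \<longrightarrow> dist b c < \<delta> \<longrightarrow> P (a,b)"
proof -
  obtain d where d: "d > 0" "\<And>p. p \<in> S \<times> S \<Longrightarrow> p \<noteq> (c,c) \<Longrightarrow> dist p (c,c) < d \<Longrightarrow> P p"
    using assms(1) unfolding eventually_at by blast
  have "P (a,b)" if "a \<in> S" "b \<in> S" "dist a c < d/2" "dist b c < d/2" for a b
  proof (cases "(a,b) = (c,c)")
    case False
    have "dist (a,b) (c,c) \<le> \<bar>dist a c\<bar> + \<bar>dist b c\<bar>"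
      unfolding dist_Pair_Pair by (rule sqrt_sum_squares_le_sum_abs)
    then show ?thesis using d(2)[of "(a,b)"] that False by simp
  qed (use assms(2) in simp)
  then show ?thesis using d(1) by (intro exI[of _ "d/2"]) auto
qed

section \<open>Moment matrices\<close>

definition moment_mat :: "'a measure \<Rightarrow> nat \<Rightarrow> ('a \<Rightarrow> real) \<Rightarrow> ('a \<Rightarrow> real) \<Rightarrow> real mat" where
  "moment_mat M n Y Z = mat (Suc n) (Suc n) (\<lambda>(i,j). \<integral>x. Y x ^ i * Z x ^ j \<partial>M)"

lemma moment_mat_carrier [simp]: "moment_mat M n Y Z \<in> carrier_mat (Suc n) (Suc n)"
  by (simp add: moment_mat_def)

lemma integrable_power_mult_power:
  fixes Y Z :: "'a \<Rightarrow> real"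
  assumes [measurable]: "Y \<in> borel_measurable M" "Z \<in> borel_measurable M"
    and "\<And>k. integrable M (\<lambda>x. \<bar>Y x\<bar> ^ k)" "\<And>k. integrable M (\<lambda>x. \<bar>Z x\<bar> ^ k)"
  shows "integrable M (\<lambda>x. Y x ^ i * Z x ^ j)"
proof (rule Bochner_Integration.integrable_bound)
  show "integrable M (\<lambda>x. \<bar>Y x\<bar> ^ (2*i) + \<bar>Z x\<bar> ^ (2*j))"
    using assms by simp
  have square_power: "(y ^ k)\<^sup>2 = \<bar>y\<bar> ^ (2*k)" for y :: real and k
    by (simp add: power_even_abs mult.commute flip: power_mult)
  show "AE x in M. norm (Y x ^ i * Z x ^ j) \<le> norm (\<bar>Y x\<bar> ^ (2*i) + \<bar>Z x\<bar> ^ (2*j))"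
  proof (rule AE_I2)
    fix x
    have "2 * (\<bar>Y x ^ i\<bar> * \<bar>Z x ^ j\<bar>) \<le> (Y x ^ i)\<^sup>2 + (Z x ^ j)\<^sup>2"
      using sum_squares_bound[of "\<bar>Y x ^ i\<bar>" "\<bar>Z x ^ j\<bar>"] by simp
    moreover have "0 \<le> \<bar>Y x ^ i\<bar> * \<bar>Z x ^ j\<bar>" by simp
    ultimately have "\<bar>Y x ^ i * Z x ^ j\<bar> \<le> (Y x ^ i)\<^sup>2 + (Z x ^ j)\<^sup>2"
      unfolding abs_mult by linarith
    then show "norm (Y x ^ i * Z x ^ j) \<le> norm (\<bar>Y x\<bar> ^ (2*i) + \<bar>Z x\<bar> ^ (2*j))"
      unfolding square_power by simp
  qed
qed measurable

lemma law_support_subset_closed: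
  fixes Y :: "'a \<Rightarrow> real"
  assumes [measurable]: "Y \<in> borel_measurable M"
    and S: "closed S" and AE: "AE x in M. Y x \<in> S"
  shows "law_support M Y \<subseteq> S"
proof
  fix y assume y: "y \<in> law_support M Y"
  show "y \<in> S"
  proof (rule ccontr)
    assume "y \<notin> S"
    moreover have "open (- S)" using S by (simp add: closed_def)
    ultimately obtain e where e: "e > 0" "ball y e \<inter> S = {}"
      by (metis Compl_iff disjoint_eq_subset_Compl open_contains_ball)
    have "AE x in M. Y x \<notin> ball y e"
      using AE by eventually_elim (use e in auto)
    then have "emeasure M (Y -` ball y e \<inter> space M) = 0"
      by (subst (asm) AE_iff_measurable[of "Y -` ball y e \<inter> space M"]) auto
    moreover have "emeasure (distr M borel Y) (ball y e) > 0"
      using y e(1) by (simp add: law_support_def)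
    ultimately show False by (simp add: emeasure_distr)
  qed
qed

lemma det_moment_mat_nonzero:
  fixes Y :: "'a \<Rightarrow> real"
  assumes [measurable]: "Y \<in> borel_measurable M"
    and moments: "\<And>k. integrable M (\<lambda>x. \<bar>Y x\<bar> ^ k)"
    and support: "infinite (law_support M Y)"
  shows "det (moment_mat M n Y Y) \<noteq> 0"
proof
  assume "det (moment_mat M n Y Y) = 0"
  then obtain c where c: "c \<in> carrier_vec (Suc n)" "c \<noteq> 0\<^sub>v (Suc n)"
    and kernel: "moment_mat M n Y Y *\<^sub>v c = 0\<^sub>v (Suc n)"
    using det_0_iff_vec_prod_zero_field[OF moment_mat_carrier] by blast
  \<comment> \<open>the quadratic form \<open>c\<^sup>T H c\<close> of the Hankel matrix is \<open>E p(Y)\<^sup>2\<close>\<close>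
  define p where "p y = (\<Sum>m\<le>n. c $ m * y ^ m)" for y :: real
  have square: "(p (Y x))\<^sup>2 = (\<Sum>j\<le>n. \<Sum>m\<le>n. c $ j * c $ m * (Y x ^ j * Y x ^ m))" for x
    unfolding p_def power2_eq_square sum_product by (simp add: algebra_simps)
  have row: "(\<Sum>m\<le>n. c $ m * (\<integral>x. Y x ^ j * Y x ^ m \<partial>M)) = 0" if "j \<le> n" for j
    using arg_cong[OF kernel, of "\<lambda>v. v $ j"] that c(1)
    by (simp add: moment_mat_def scalar_prod_def lessThan_Suc_atMost atLeast0LessThan mult.commute)
  note integrable = integrable_power_mult_power[OF assms(1) assms(1) moments moments]
  have integrable_square: "integrable M (\<lambda>x. (p (Y x))\<^sup>2)"
    unfolding square by (intro Bochner_Integration.integrable_sum integrable_mult_right integrable)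
  have "(\<integral>x. (p (Y x))\<^sup>2 \<partial>M) = (\<Sum>j\<le>n. \<Sum>m\<le>n. c $ j * c $ m * (\<integral>x. Y x ^ j * Y x ^ m \<partial>M))"
    unfolding square using integrable by (simp add: Bochner_Integration.integral_sum Bochner_Integration.integrable_sum)
  also have "\<dots> = (\<Sum>j\<le>n. c $ j * (\<Sum>m\<le>n. c $ m * (\<integral>x. Y x ^ j * Y x ^ m \<partial>M)))"
    by (simp add: sum_distrib_left mult.assoc)
  also have "\<dots> = 0" using row by simp
  finally have "AE x in M. (p (Y x))\<^sup>2 = 0"
    using integral_nonneg_eq_0_iff_AE[OF integrable_square] by simp
  then have "AE x in M. Y x \<in> {y. p y = 0}" by simp
  moreover have "closed {y. p y = 0}"
    unfolding p_def by (intro closed_Collect_eq continuous_intros)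
  ultimately have "law_support M Y \<subseteq> {y. p y = 0}"
    using law_support_subset_closed[OF assms(1)] by blast
  moreover have "finite {y. p y = 0}"
  proof -
    have "\<exists>m\<le>n. c $ m \<noteq> 0"
    proof (rule ccontr)
      assume "\<not> (\<exists>m\<le>n. c $ m \<noteq> 0)"
      then have "c = 0\<^sub>v (Suc n)" using c(1) by (intro eq_vecI) auto
      with c(2) show False ..
    qed
    then show ?thesis unfolding p_def by (intro polyfun_rootbound_finite) blast
  qed
  ultimately have "finite (law_support M Y)" by (rule finite_subset)
  with support show False ..
qed

section \<open>Processes with polynomial regression\<close>

lemma subalgebra_past_sigma:
  assumes "\<forall>t\<in>I. X t \<in> borel_measurable M"
  shows "subalgebra M (past_sigma M I X s)"
proof -
  let ?G = "\<Union>v\<in>{v\<in>I. v \<le> s}. {X v -` B \<inter> space M | B. B \<in> sets borel}"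
  have "?G \<subseteq> Pow (space M)" "?G \<subseteq> sets M"
    using assms by (auto intro: measurable_sets)
  then show ?thesis
    by (simp add: subalgebra_def past_sigma_def space_measure_of sets_measure_of sets.sigma_sets_subset)
qed

lemma measurable_past_sigma:
  assumes "v \<in> I" "v \<le> s"
  shows "X v \<in> borel_measurable (past_sigma M I X s)"
proof (rule borel_measurableI)
  fix S :: "real set" assume "open S"
  let ?G = "\<Union>v\<in>{v\<in>I. v \<le> s}. {X v -` B \<inter> space M | B. B \<in> sets borel}"
  have "?G \<subseteq> Pow (space M)" by auto
  moreover have "X v -` S \<inter> space M \<in> ?G" using assms borel_open[OF \<open>open S\<close>] by blast
  ultimately show "X v -` S \<inter> space (past_sigma M I X s) \<in> sets (past_sigma M I X s)"
    by (simp add: past_sigma_def space_measure_of sets_measure_of sigma_sets.Basic)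
qed

lemma is_interval_segment: "is_interval (segment l r)"
  unfolding is_interval_1 segment_def by auto (meson ereal_less_eq(3) order_trans)+

locale polynomial_regression_process = prob_space M for M :: "'a measure" +
  fixes I :: "real set" and X :: "real \<Rightarrow> 'a \<Rightarrow> real" and N :: nat
    and \<gamma> :: "nat \<Rightarrow> nat \<Rightarrow> real \<Rightarrow> real \<Rightarrow> real"
  assumes interval: "is_interval I"
    and measurable: "\<And>t. t \<in> I \<Longrightarrow> X t \<in> borel_measurable M"
    and moments: "\<And>t k. t \<in> I \<Longrightarrow> integrable M (\<lambda>x. \<bar>X t x\<bar> ^ k)"
    and infinite_support: "\<And>t. t \<in> I \<Longrightarrow> infinite (law_support M (X t))"
    and MSC: "MSC N M I X"
    and regression: "poly_regression N M I X \<gamma>"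
    and \<gamma>_00: "\<And>s t. \<gamma> 0 0 s t = 1"
    and \<gamma>_upper: "\<And>i j s t. i < j \<Longrightarrow> \<gamma> i j s t = 0"
begin

lemma integrable_mixed_moment:
  "s \<in> I \<Longrightarrow> t \<in> I \<Longrightarrow> integrable M (\<lambda>x. X s x ^ i * X t x ^ j)"
  by (intro integrable_power_mult_power measurable moments)

lemma mixed_moment_regression:
  assumes s: "s \<in> I" and t: "t \<in> I" and st: "s \<le> t" and v: "v \<in> I" and vs: "v \<le> s"
    and i: "i \<le> N"
  shows "(\<integral>x. X t x ^ i * X v x ^ j \<partial>M) = (\<Sum>k\<le>i. \<gamma> i k s t * (\<integral>x. X s x ^ k * X v x ^ j \<partial>M))"
proof (cases "i = 0")
  case True
  then show ?thesis by (simp add: \<gamma>_00)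
next
  case False
  let ?F = "past_sigma M I X s"
  have subalgebra: "subalgebra M ?F"
    using measurable by (intro subalgebra_past_sigma) blast
  interpret F: sigma_finite_subalgebra M ?F
    using subalgebra by (intro finite_measure_subalgebra_is_sigma_finite)
      (simp add: finite_measure_subalgebra_def finite_measure_subalgebra_axioms_def finite_measure_axioms)
  have [measurable]: "X t \<in> borel_measurable M" "X s \<in> borel_measurable M" "X v \<in> borel_measurable M"
    using s t v measurable by auto
  have [measurable]: "X v \<in> borel_measurable ?F" using measurable_past_sigma[OF v vs] .
  have [measurable]: "real_cond_exp M ?F (\<lambda>x. X t x ^ i) \<in> borel_measurable M"
    by (rule measurable_from_subalg[OF subalgebra]) simp
  have cond_exp: "AE x in M. real_cond_exp M ?F (\<lambda>x. X t x ^ i) x = (\<Sum>k\<le>i. \<gamma> i k s t * X s x ^ k)"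
    using regression False i s t st unfolding poly_regression_def by auto
  \<comment> \<open>\<open>X\<^sub>v\<^sup>j\<close> is \<open>F\<^sub>\<le>\<^sub>s\<close>-measurable, so it can be pulled into the conditional expectation\<close>
  have "(\<integral>x. X t x ^ i * X v x ^ j \<partial>M) = (\<integral>x. X v x ^ j * real_cond_exp M ?F (\<lambda>x. X t x ^ i) x \<partial>M)"
    using F.real_cond_exp_intg(2)[of "\<lambda>x. X v x ^ j" "\<lambda>x. X t x ^ i"] integrable_mixed_moment[OF v t]
    by (simp add: mult.commute)
  also have "\<dots> = (\<integral>x. (\<Sum>k\<le>i. \<gamma> i k s t * (X s x ^ k * X v x ^ j)) \<partial>M)"
    by (rule integral_cong_AE) (use cond_exp in \<open>auto simp: sum_distrib_left algebra_simps\<close>)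
  also have "\<dots> = (\<Sum>k\<le>i. \<gamma> i k s t * (\<integral>x. X s x ^ k * X v x ^ j \<partial>M))"
    using integrable_mixed_moment[OF s v] by simp
  finally show ?thesis .
qed

lemma moment_mat_regression:
  assumes n: "n \<le> N" and a: "a \<in> I" and b: "b \<in> I" and ab: "a \<le> b" and v: "v \<in> I" and va: "v \<le> a"
  shows "moment_mat M n (X b) (X v) = A_mat n \<gamma> a b * moment_mat M n (X a) (X v)"
proof (rule eq_matI)
  fix i j assume "i < dim_row (A_mat n \<gamma> a b * moment_mat M n (X a) (X v))"
    and "j < dim_col (A_mat n \<gamma> a b * moment_mat M n (X a) (X v))"
  then have i: "i < Suc n" and j: "j < Suc n" by (auto simp: A_mat_def moment_mat_def)
  have "(A_mat n \<gamma> a b * moment_mat M n (X a) (X v)) $$ (i,j)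
      = (\<Sum>k<Suc i. \<gamma> i k a b * (\<integral>x. X a x ^ k * X v x ^ j \<partial>M))"
  proof -
    have "(A_mat n \<gamma> a b * moment_mat M n (X a) (X v)) $$ (i,j)
        = A_mat n \<gamma> a b $$ (i,i) * moment_mat M n (X a) (X v) $$ (i,j)
          + (\<Sum>k<i. A_mat n \<gamma> a b $$ (i,k) * moment_mat M n (X a) (X v) $$ (k,j))"
      by (rule lower_triangular_mult_entry[OF A_mat_carrier moment_mat_carrier _ i j])
         (simp add: A_mat_def \<gamma>_upper)
    also have "\<dots> = (\<Sum>k<Suc i. \<gamma> i k a b * (\<integral>x. X a x ^ k * X v x ^ j \<partial>M))"
      using i j by (simp add: A_mat_def moment_mat_def add.commute)
    finally show ?thesis .
  qed
  also have "\<dots> = (\<integral>x. X b x ^ i * X v x ^ j \<partial>M)"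
    using mixed_moment_regression[OF a b ab v va, of i j] i n by (simp add: lessThan_Suc_atMost)
  finally show "moment_mat M n (X b) (X v) $$ (i,j) = (A_mat n \<gamma> a b * moment_mat M n (X a) (X v)) $$ (i,j)"
    using i j by (simp add: moment_mat_def)
qed (auto simp: A_mat_def moment_mat_def)

lemma det_moment_mat_X_nonzero: "s \<in> I \<Longrightarrow> det (moment_mat M n (X s) (X s)) \<noteq> 0"
  by (intro det_moment_mat_nonzero measurable moments infinite_support)

lemma A_mat_cocycle:
  assumes n: "n \<le> N" and s: "s \<in> I" and t: "t \<in> I" and u: "u \<in> I" and st: "s \<le> t" and tu: "t \<le> u"
  shows "A_mat n \<gamma> s u = A_mat n \<gamma> t u * A_mat n \<gamma> s t"
proof (rule vec_space.det_nonzero_congruence[where n = "Suc n", OF _ det_moment_mat_X_nonzero[OF s]])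
  have "A_mat n \<gamma> s u * moment_mat M n (X s) (X s) = moment_mat M n (X u) (X s)"
    using moment_mat_regression[OF n s u _ s] st tu by simp
  also have "\<dots> = A_mat n \<gamma> t u * (A_mat n \<gamma> s t * moment_mat M n (X s) (X s))"
    using moment_mat_regression[OF n t u tu s st] moment_mat_regression[OF n s t st s] by simp
  finally show "A_mat n \<gamma> s u * moment_mat M n (X s) (X s)
      = A_mat n \<gamma> t u * A_mat n \<gamma> s t * moment_mat M n (X s) (X s)"
    by (simp add: assoc_mult_mat[of _ "Suc n" "Suc n" _ "Suc n" _ "Suc n"])
qed (use mult_carrier_mat[OF A_mat_carrier A_mat_carrier] in auto)

lemma A_mat_refl:
  assumes "n \<le> N" "s \<in> I"
  shows "A_mat n \<gamma> s s = 1\<^sub>m (Suc n)"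
proof (rule vec_space.det_nonzero_congruence[where n = "Suc n", OF _ det_moment_mat_X_nonzero[OF assms(2)]])
  show "A_mat n \<gamma> s s * moment_mat M n (X s) (X s) = 1\<^sub>m (Suc n) * moment_mat M n (X s) (X s)"
    using moment_mat_regression[OF assms assms(2) order.refl assms(2) order.refl]
    by (simp add: left_mult_one_mat[OF moment_mat_carrier])
qed auto

lemma A_mat_lower_triangular: "lower_triangular_mat (A_mat n \<gamma> s t)"
  by (simp add: lower_triangular_mat_def A_mat_def \<gamma>_upper)

lemma continuous_mixed_moment:
  assumes c: "c \<in> I" and i: "i \<le> N" and j: "j \<le> N"
    and f: "continuous (at (c,c) within I \<times> I) f" "f (c,c) = (c,c)" "f ` (I \<times> I) \<subseteq> I \<times> I"
  shows "continuous (at (c,c) within I \<times> I) (\<lambda>p. \<integral>x. X (fst (f p)) x ^ i * X (snd (f p)) x ^ j \<partial>M)"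
proof -
  let ?g = "\<lambda>(a,b). \<integral>x. X a x ^ i * X b x ^ j \<partial>M"
  have "continuous (at (c,c) within I \<times> I) ?g"
    using MSC c i j unfolding MSC_def by blast
  then have "continuous (at (f (c,c)) within f ` (I \<times> I)) ?g"
    unfolding f(2) by (rule continuous_within_subset) (rule f(3))
  from continuous_within_compose[OF f(1) this] show ?thesis
    by (simp add: o_def case_prod_beta)
qed

lemma det_A_mat_locally_pos:
  assumes n: "n \<le> N" and c: "c \<in> I"
  shows "\<exists>\<delta>>0. \<forall>a\<in>I. \<forall>b\<in>I. a \<le> b \<longrightarrow> dist a c < \<delta> \<longrightarrow> dist b c < \<delta> \<longrightarrow> 0 < det (A_mat n \<gamma> a b)"
proof -
  \<comment> \<open>for \<open>a \<le> b\<close>, \<open>h(a,b) = det A(a,b) \<cdot> (det M(a,a))\<^sup>2\<close>, and \<open>h\<close> is continuous and positive at \<open>(c,c)\<close>\<close>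
  define h where "h p = det (moment_mat M n (X (snd p)) (X (fst p)))
      * det (moment_mat M n (X (fst p)) (X (fst p)))" for p
  have "continuous (at (c,c) within I \<times> I) (\<lambda>p. \<integral>x. X (snd p) x ^ i * X (fst p) x ^ j \<partial>M)"
    "continuous (at (c,c) within I \<times> I) (\<lambda>p. \<integral>x. X (fst p) x ^ i * X (fst p) x ^ j \<partial>M)"
    if "i \<le> N" "j \<le> N" for i j
  proof -
    have "continuous (at (c,c) within I \<times> I) (\<lambda>p. (snd p, fst p))"
      "continuous (at (c,c) within I \<times> I) (\<lambda>p. (fst p, fst p))"
      "(\<lambda>p. (snd p, fst p)) ` (I \<times> I) \<subseteq> I \<times> I" "(\<lambda>p. (fst p, fst p)) ` (I \<times> I) \<subseteq> I \<times> I"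
      by (auto intro!: continuous_intros)
    from continuous_mixed_moment[OF c that this(1) _ this(3)] continuous_mixed_moment[OF c that this(2) _ this(4)]
    show "continuous (at (c,c) within I \<times> I) (\<lambda>p. \<integral>x. X (snd p) x ^ i * X (fst p) x ^ j \<partial>M)"
      "continuous (at (c,c) within I \<times> I) (\<lambda>p. \<integral>x. X (fst p) x ^ i * X (fst p) x ^ j \<partial>M)"
      by auto
  qed
  then have "continuous (at (c,c) within I \<times> I) h"
    unfolding h_def moment_mat_def using n
    by (intro continuous_mult continuous_det_mat) auto
  moreover have "0 < h (c,c)"
    using det_moment_mat_X_nonzero[OF c, of n] by (simp add: h_def flip: power2_eq_square)
  ultimately have "eventually (\<lambda>p. 0 < h p) (at (c,c) within I \<times> I)"
    unfolding continuous_within by (rule order_tendstoD(1))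
  then obtain \<delta> where \<delta>: "\<delta> > 0" "\<forall>a\<in>I. \<forall>b\<in>I. dist a c < \<delta> \<longrightarrow> dist b c < \<delta> \<longrightarrow> 0 < h (a,b)"
    using eventually_at_pair_within_imp_dist \<open>0 < h (c,c)\<close> by blast
  have h_factor: "h (a,b) = det (A_mat n \<gamma> a b) * (det (moment_mat M n (X a) (X a)))\<^sup>2"
    if "a \<in> I" "b \<in> I" "a \<le> b" for a b
    using moment_mat_regression[OF n that that(1) order.refl]
    by (simp add: h_def det_mult[OF A_mat_carrier moment_mat_carrier] power2_eq_square)
  show ?thesis
  proof (intro exI[of _ \<delta>] conjI ballI impI)
    fix a b assume ab: "a \<in> I" "b \<in> I" "a \<le> b" and "dist a c < \<delta>" "dist b c < \<delta>"
    then have "0 < h (a,b)" using \<delta>(2) by blast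
    then have "0 < det (A_mat n \<gamma> a b) * (det (moment_mat M n (X a) (X a)))\<^sup>2"
      using h_factor[OF ab] by simp
    then show "0 < det (A_mat n \<gamma> a b)" by (simp add: zero_less_mult_iff)
  qed (rule \<delta>(1))
qed

lemma det_A_mat_pos:
  assumes "n \<le> N" "a \<in> I" "b \<in> I" "a \<le> b"
  shows "0 < det (A_mat n \<gamma> a b)"
proof (rule locally_positive_cocycle_positive[OF interval _ det_A_mat_locally_pos[OF assms(1)] assms(2-4)])
  fix s t u assume "s \<in> I" "t \<in> I" "u \<in> I" "s \<le> t" "t \<le> u"
  then show "det (A_mat n \<gamma> s u) = det (A_mat n \<gamma> t u) * det (A_mat n \<gamma> s t)"
    by (simp add: A_mat_cocycle[OF assms(1), of s t u] det_mult[OF A_mat_carrier A_mat_carrier])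
qed

lemma A_mat_diag_pos:
  assumes k: "k \<le> N" and ab: "a \<in> I" "b \<in> I" "a \<le> b"
  shows "0 < \<gamma> k k a b"
proof (cases k)
  case 0
  then show ?thesis by (simp add: \<gamma>_00)
next
  case (Suc m)
  have "0 < (\<Prod>i<k. \<gamma> i i a b) * \<gamma> k k a b"
    using det_A_mat_pos[OF k ab] by (simp add: det_A_mat \<gamma>_upper)
  moreover have "0 < (\<Prod>i<k. \<gamma> i i a b)"
    using det_A_mat_pos[of m, OF _ ab] k Suc by (simp add: det_A_mat \<gamma>_upper)
  ultimately show ?thesis by (rule zero_less_mult_pos)
qed

lemma A_mat_two_sided_inverse:
  assumes "s \<in> I" "t \<in> I" "s \<le> t"
  shows "\<exists>B\<in>carrier_mat (Suc N) (Suc N). A_mat N \<gamma> s t * B = 1\<^sub>m (Suc N) \<and> B * A_mat N \<gamma> s t = 1\<^sub>m (Suc N)"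
  using det_nonzero_imp_inverse[OF A_mat_carrier] det_A_mat_pos[OF order.refl assms] by simp

lemma A_mat_right_inverse_lower_triangular:
  assumes "s \<in> I" "t \<in> I" "s \<le> t"
    and B: "B \<in> carrier_mat (Suc N) (Suc N)" "A_mat N \<gamma> s t * B = 1\<^sub>m (Suc N)"
  shows "lower_triangular_mat B \<and> (\<forall>i\<le>N. 0 < B $$ (i,i))"
proof -
  have "0 < A_mat N \<gamma> s t $$ (i,i)" if "i < Suc N" for i
    using A_mat_diag_pos[of i, OF _ assms(1-3)] that by (simp add: A_mat_def)
  from lower_triangular_mat_right_inverse[OF A_mat_carrier B(1) A_mat_lower_triangular this B(2)]
  show ?thesis by (simp add: less_Suc_eq_le)
qed

lemma A_mat_factorization:
  "\<exists>V Vinv. (\<forall>t\<in>I. V t \<in> carrier_mat (Suc N) (Suc N) \<and> Vinv t \<in> carrier_mat (Suc N) (Suc N)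
      \<and> V t * Vinv t = 1\<^sub>m (Suc N) \<and> Vinv t * V t = 1\<^sub>m (Suc N)
      \<and> lower_triangular_mat (V t) \<and> (\<forall>i\<le>N. 0 < V t $$ (i,i)))
    \<and> (\<forall>s\<in>I. \<forall>u\<in>I. s \<le> u \<longrightarrow> A_mat N \<gamma> s u = V u * Vinv s)"
proof (rule cocycle_factorization[where P = "\<lambda>V. lower_triangular_mat V \<and> (\<forall>i\<le>N. 0 < V $$ (i,i))"])
  fix s t assume st: "s \<in> I" "t \<in> I" "s \<le> t"
  show "lower_triangular_mat (A_mat N \<gamma> s t) \<and> (\<forall>i\<le>N. 0 < A_mat N \<gamma> s t $$ (i,i))"
    using A_mat_lower_triangular A_mat_diag_pos[OF _ st] by (simp add: A_mat_def)
next
  fix s t B assume "s \<in> I" "t \<in> I" "s \<le> t" "B \<in> carrier_mat (Suc N) (Suc N)"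
    "A_mat N \<gamma> s t * B = 1\<^sub>m (Suc N)"
  then show "lower_triangular_mat B \<and> (\<forall>i\<le>N. 0 < B $$ (i,i))"
    by (rule A_mat_right_inverse_lower_triangular)
qed (auto intro: A_mat_two_sided_inverse A_mat_cocycle[OF order.refl])

end

theorem proposition1:
  fixes M :: "'a measure" and X :: "real \<Rightarrow> 'a \<Rightarrow> real" and l r :: ereal
    and N :: nat and \<gamma> :: "nat \<Rightarrow> nat \<Rightarrow> real \<Rightarrow> real \<Rightarrow> real"
  defines "I \<equiv> segment l r"
  assumes "prob_space M"
    and "N \<ge> 1"
    and "\<forall>t\<in>I. X t \<in> borel_measurable M"
    and "\<forall>t\<in>I. \<forall>n::nat. integrable M (\<lambda>x. \<bar>X t x\<bar> ^ n)"
    and "\<forall>t\<in>I. infinite (law_support M (X t))"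
    and "markov_process M I X"
    and "TLI N M I X"
    and "MSC N M I X"
    and "poly_regression N M I X \<gamma>"
    and "\<forall>s t. \<gamma> 0 0 s t = 1"
    and "\<forall>i j s t. j > i \<longrightarrow> \<gamma> i j s t = 0"
  shows "(\<forall>s\<in>I. \<forall>t\<in>I. \<forall>u\<in>I. s \<le> t \<and> t \<le> u \<longrightarrow>
            invertible_mat (A_mat N \<gamma> s t)
          \<and> A_mat N \<gamma> s u = A_mat N \<gamma> t u * A_mat N \<gamma> s t
          \<and> A_mat N \<gamma> s s = 1\<^sub>m (N+1))
       \<and> (\<exists>V Vinv. (\<forall>t\<in>I. V t \<in> carrier_mat (N+1) (N+1) \<and> Vinv t \<in> carrier_mat (N+1) (N+1)
              \<and> V t * Vinv t = 1\<^sub>m (N+1) \<and> Vinv t * V t = 1\<^sub>m (N+1)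
              \<and> lower_triangular_mat (V t))
            \<and> (\<forall>s\<in>I. \<forall>u\<in>I. s \<le> u \<longrightarrow> A_mat N \<gamma> s u = V u * Vinv s))
       \<and> (\<exists>V Vinv. (\<forall>t\<in>I. V t \<in> carrier_mat (N+1) (N+1) \<and> Vinv t \<in> carrier_mat (N+1) (N+1)
              \<and> V t * Vinv t = 1\<^sub>m (N+1) \<and> Vinv t * V t = 1\<^sub>m (N+1)
              \<and> lower_triangular_mat (V t) \<and> (\<forall>i\<le>N. V t $$ (i,i) > 0))
            \<and> (\<forall>s\<in>I. \<forall>u\<in>I. s \<le> u \<longrightarrow> A_mat N \<gamma> s u = V u * Vinv s))"
proof -
  interpret polynomial_regression_process M I X N \<gamma>
  proof (intro polynomial_regression_process.intro polynomial_regression_process_axioms.intro)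
    show "is_interval I" unfolding I_def by (rule is_interval_segment)
  qed (use assms in blast)+
  have "invertible_mat (A_mat N \<gamma> s t) \<and> A_mat N \<gamma> s u = A_mat N \<gamma> t u * A_mat N \<gamma> s t
      \<and> A_mat N \<gamma> s s = 1\<^sub>m (N+1)" if "s \<in> I" "t \<in> I" "u \<in> I" "s \<le> t" "t \<le> u" for s t u
    using det_nonzero_imp_invertible_mat[OF A_mat_carrier] det_A_mat_pos[OF order.refl that(1,2,4)]
      A_mat_cocycle[OF order.refl that] A_mat_refl[OF order.refl that(1)] by simp
  with A_mat_factorization show ?thesis unfolding Suc_eq_plus1 by blast
qed

end
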